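(* Consider Model A with $\delta>-1$. There exists a constant $C>0$ such that, as $n\to\infty$, $$\mathbf P\Bigl(\max_{k}\bigl|N_{>k}(n)-np_{>k}\bigr|\ge C\bigl(1+\sqrt{n\log n}\bigr)\Bigr)=o(1).$$
   Context: Model A (with $\delta>-1$): $G(1)$ consists of a single node $v_1$ with a self loop (so $v_1$ has degree 2; a self loop contributes 2 to the degree). For $n\ge1$, given $G(n)$ (nodes $v_1,\dots,v_n$, $n$ edges), $G(n+1)$ is obtained by adding a new node $v_{n+1}$ and one edge joining $v_{n+1}$ to an existing node $v_i$, $1\le i\le n$, chosen with probability $\frac{D_i(n)+\delta}{(2+\delta)n}$, where $D_i(n)$ is the degree of $v_i$ in $G(n)$. $N_{>k}(n):=\#\{1\le i\le n: D_i(n)>k\}$ for $k\ge1$, $N_{>0}(n):=n$. For $k\ge0$, $$p_{>k}:=\frac{\Gamma(k+1+\delta)\,\Gamma(3+2\delta)}{\Gamma(k+3+2\delta)\,\Gamma(1+\delta)}.$$ *)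

theory Defs
  imports "HOL-Probability.Probability"
begin

text \<open>Model A (preferential attachment tree with a self loop at v1).
  The state G(n) is represented by its degree sequence: a list ds of length n,
  where ds ! (i-1) = D_i(n).  The attachment rule depends only on degrees, so the
  degree-sequence process has exactly the law of the degree sequence of G(n).\<close>

definition attach_weight :: "real \<Rightarrow> nat list \<Rightarrow> nat \<Rightarrow> real" where
  "attach_weight \<delta> ds i =
     (if i < length ds then (real (ds ! i) + \<delta>) / ((2 + \<delta>) * real (length ds)) else 0)"

definition modelA_step :: "real \<Rightarrow> nat list \<Rightarrow> nat list pmf" where
  "modelA_step \<delta> ds =
     map_pmf (\<lambda>i. ds[i := ds ! i + 1] @ [1]) (embed_pmf (attach_weight \<delta> ds))"

text \<open>modelA_aux delta m is the law of (the degree sequence of) G(m+1).\<close>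
primrec modelA_aux :: "real \<Rightarrow> nat \<Rightarrow> nat list pmf" where
  "modelA_aux \<delta> 0 = return_pmf [2]"
| "modelA_aux \<delta> (Suc m) = bind_pmf (modelA_aux \<delta> m) (modelA_step \<delta>)"

definition modelA :: "real \<Rightarrow> nat \<Rightarrow> nat list pmf" where
  "modelA \<delta> n = modelA_aux \<delta> (n - 1)"

definition N_gt :: "nat \<Rightarrow> nat list \<Rightarrow> nat" where
  "N_gt k ds = (if k = 0 then length ds else card {i. i < length ds \<and> ds ! i > k})"

definition p_gt :: "real \<Rightarrow> nat \<Rightarrow> real" where
  "p_gt \<delta> k = Gamma (real k + 1 + \<delta>) * Gamma (3 + 2 * \<delta>) /
                (Gamma (real k + 3 + 2 * \<delta>) * Gamma (1 + \<delta>))"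

end

theory Submission
  imports Defs
begin

text \<open>For fixed \<open>k\<close>, the Doob martingale \<open>E[N_gt k (G(n)) | G(m)]\<close> has an explicit form: each
  vertex of degree \<open>d\<close> in \<open>G(m)\<close>, and each vertex still to arrive, contributes the probability that
  its degree exceeds \<open>k\<close> in \<open>G(n)\<close>.  One step raises a single degree by one and adds a vertex of
  degree 1, so the martingale moves by at most 2, and the Azuma--Hoeffding inequality bounds the
  probability that \<open>N_gt k\<close> deviates from its mean by \<open>4 sqrt (n ln n)\<close> by \<open>2 / n\<^sup>2\<close>.  The mean
  satisfies the same linear recursion in \<open>n\<close> as \<open>n p_gt k\<close>, up to an error that stays below 1.
  Since \<open>N_gt k\<close> vanishes and \<open>n p_gt k \<le> 1\<close> for \<open>k > n\<close>, a union bound over \<open>k \<le> n\<close> leaves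
  probability at most \<open>4 / n\<close>.\<close>

section \<open>Azuma--Hoeffding for Markov chains of pmfs\<close>

lemma expectation_cong_set_pmf:
  fixes f g :: "'a \<Rightarrow> real"
  assumes "\<And>x. x \<in> set_pmf p \<Longrightarrow> f x = g x"
  shows "measure_pmf.expectation p f = measure_pmf.expectation p g"
  by (rule integral_cong_AE) (use assms in \<open>auto simp: AE_measure_pmf_iff\<close>)

lemma expectation_bind_pmf_finite:
  fixes h :: "'b \<Rightarrow> real"
  assumes fin: "finite (set_pmf p)" and fin_K: "\<And>x. x \<in> set_pmf p \<Longrightarrow> finite (set_pmf (K x))"
  shows "measure_pmf.expectation (p \<bind> K) h
           = measure_pmf.expectation p (\<lambda>x. measure_pmf.expectation (K x) h)"
proof -
  have "measure_pmf.expectation (p \<bind> K) h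
          = (\<Sum>x\<in>set_pmf p. pmf p x *\<^sub>R measure_pmf.expectation (K x) h)"
    by (rule pmf_expectation_bind) (use fin fin_K in auto)
  also have "\<dots> = measure_pmf.expectation p (\<lambda>x. measure_pmf.expectation (K x) h)"
    by (rule integral_measure_pmf[symmetric]) (use fin in auto)
  finally show ?thesis .
qed

locale pmf_chain_martingale =
  fixes X :: "nat \<Rightarrow> 'a pmf" and K :: "'a \<Rightarrow> 'a pmf"
    and f :: "nat \<Rightarrow> 'a \<Rightarrow> real" and N :: nat and B :: real
  assumes X_Suc: "X (Suc m) = X m \<bind> K"
    and martingale: "m < N \<Longrightarrow> x \<in> set_pmf (X m) \<Longrightarrow>
           measure_pmf.expectation (K x) (f (Suc m)) = f m x"
    and bounded_increments: "m < N \<Longrightarrow> x \<in> set_pmf (X m) \<Longrightarrow> y \<in> set_pmf (K x) \<Longrightarrow>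
           \<bar>f (Suc m) y - f m x\<bar> \<le> B"
begin

lemma uminus: "pmf_chain_martingale X K (\<lambda>m x. - f m x) N B"
  by unfold_locales (auto simp: X_Suc martingale abs_minus_commute dest: bounded_increments)

lemma expectation_eq_initial:
  assumes fin: "\<And>m. finite (set_pmf (X m))" and "m \<le> N"
  shows "measure_pmf.expectation (X m) (f m) = measure_pmf.expectation (X 0) (f 0)"
  using \<open>m \<le> N\<close>
proof (induction m)
  case (Suc m)
  have fin_K: "finite (set_pmf (K x))" if "x \<in> set_pmf (X m)" for x
    by (rule finite_subset[OF _ fin[of "Suc m"]]) (use that in \<open>auto simp: X_Suc\<close>)
  have "measure_pmf.expectation (X (Suc m)) (f (Suc m))
          = measure_pmf.expectation (X m) (\<lambda>x. measure_pmf.expectation (K x) (f (Suc m)))"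
    unfolding X_Suc by (rule expectation_bind_pmf_finite[OF fin fin_K])
  also have "\<dots> = measure_pmf.expectation (X m) (f m)"
    by (rule expectation_cong_set_pmf) (use martingale Suc.prems in auto)
  finally show ?case using Suc by simp
qed simp

text \<open>Each step is a centred random variable with range of length \<open>2 B\<close>, so Hoeffding's lemma
  bounds its conditional exponential moment by \<open>exp (l\<^sup>2 B\<^sup>2 / 2)\<close>.\<close>

lemma exp_moment_step_le:
  assumes "l > 0" "m < N" "x \<in> set_pmf (X m)"
  shows "(\<integral>\<^sup>+y. ennreal (exp (l * f (Suc m) y)) \<partial>K x)
           \<le> ennreal (exp (l * f m x)) * ennreal (exp (l\<^sup>2 * B\<^sup>2 / 2))"
proof -
  interpret step: interval_bounded_random_variable "measure_pmf (K x)" "f (Suc m)"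
      "f m x - B" "f m x + B"
    by unfold_locales
      (auto simp: AE_measure_pmf_iff abs_le_iff dest!: bounded_increments[OF assms(2,3)])
  have range: "l\<^sup>2 * ((f m x + B) - (f m x - B))\<^sup>2 / 8 = l\<^sup>2 * B\<^sup>2 / 2"
    by (simp add: power2_eq_square algebra_simps)
  have hoeffding: "(\<integral>\<^sup>+y. ennreal (exp (l * (f (Suc m) y - f m x))) \<partial>K x)
                     \<le> ennreal (exp (l\<^sup>2 * B\<^sup>2 / 2))"
    using step.Hoeffdings_lemma_nn_integral[OF \<open>l > 0\<close>]
    unfolding range martingale[OF \<open>m < N\<close> \<open>x \<in> set_pmf (X m)\<close>] .
  have "(\<integral>\<^sup>+y. ennreal (exp (l * f (Suc m) y)) \<partial>K x)
          = (\<integral>\<^sup>+y. ennreal (exp (l * f m x)) * ennreal (exp (l * (f (Suc m) y - f m x))) \<partial>K x)"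
    by (intro nn_integral_cong) (simp add: ennreal_mult[symmetric] exp_add[symmetric] algebra_simps)
  also have "\<dots> = ennreal (exp (l * f m x))
                   * (\<integral>\<^sup>+y. ennreal (exp (l * (f (Suc m) y - f m x))) \<partial>K x)"
    by (rule nn_integral_cmult) simp
  also have "\<dots> \<le> ennreal (exp (l * f m x)) * ennreal (exp (l\<^sup>2 * B\<^sup>2 / 2))"
    by (intro mult_left_mono hoeffding) simp
  finally show ?thesis .
qed

lemma exp_moment_le:
  assumes "l > 0" "m \<le> N"
  shows "(\<integral>\<^sup>+x. ennreal (exp (l * f m x)) \<partial>X m)
           \<le> (\<integral>\<^sup>+x. ennreal (exp (l * f 0 x)) \<partial>X 0) * ennreal (exp (real m * (l\<^sup>2 * B\<^sup>2 / 2)))"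
  using \<open>m \<le> N\<close>
proof (induction m)
  case (Suc m)
  let ?K = "ennreal (exp (l\<^sup>2 * B\<^sup>2 / 2))"
  have K_Suc: "ennreal (exp (real m * (l\<^sup>2 * B\<^sup>2 / 2))) * ?K
                 = ennreal (exp (real (Suc m) * (l\<^sup>2 * B\<^sup>2 / 2)))"
    by (simp add: ennreal_mult[symmetric] exp_add[symmetric] field_simps)
  have "(\<integral>\<^sup>+x. ennreal (exp (l * f (Suc m) x)) \<partial>X (Suc m))
          = (\<integral>\<^sup>+x. (\<integral>\<^sup>+y. ennreal (exp (l * f (Suc m) y)) \<partial>K x) \<partial>X m)"
    by (simp add: X_Suc)
  also have "\<dots> \<le> (\<integral>\<^sup>+x. ennreal (exp (l * f m x)) * ?K \<partial>X m)"
    using Suc.prems by (intro nn_integral_mono_AE)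
      (auto simp: AE_measure_pmf_iff intro: exp_moment_step_le[OF \<open>l > 0\<close>])
  also have "\<dots> = (\<integral>\<^sup>+x. ennreal (exp (l * f m x)) \<partial>X m) * ?K"
    by (rule nn_integral_multc) simp
  also have "\<dots> \<le> (\<integral>\<^sup>+x. ennreal (exp (l * f 0 x)) \<partial>X 0)
                   * ennreal (exp (real m * (l\<^sup>2 * B\<^sup>2 / 2))) * ?K"
    using Suc by (intro mult_right_mono) auto
  also have "\<dots> = (\<integral>\<^sup>+x. ennreal (exp (l * f 0 x)) \<partial>X 0)
                   * ennreal (exp (real (Suc m) * (l\<^sup>2 * B\<^sup>2 / 2)))"
    by (simp only: mult.assoc K_Suc)
  finally show ?case .
qed simp

lemma upper_tail_le:
  assumes X_0: "X 0 = return_pmf x\<^sub>0" and "t > 0" "B > 0" "N > 0"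
  shows "measure_pmf.prob (X N) {x. f N x - f 0 x\<^sub>0 \<ge> t} \<le> exp (- t\<^sup>2 / (2 * real N * B\<^sup>2))"
proof -
  define l where "l = t / (real N * B\<^sup>2)"
  have "l > 0" using assms by (simp add: l_def)
  have exponent: "- l * (f 0 x\<^sub>0 + t) + l * f 0 x\<^sub>0 + real N * (l\<^sup>2 * B\<^sup>2 / 2)
                    = - t\<^sup>2 / (2 * real N * B\<^sup>2)"
    unfolding l_def using assms by (simp add: power2_eq_square field_simps)
  have "emeasure (X N) {x. f N x - f 0 x\<^sub>0 \<ge> t} = emeasure (X N) {x\<in>UNIV. f N x \<ge> f 0 x\<^sub>0 + t}"
    by (simp add: algebra_simps)
  also have "\<dots> \<le> ennreal (exp (- l * (f 0 x\<^sub>0 + t))) * (\<integral>\<^sup>+x. ennreal (exp (l * f N x)) \<partial>X N)"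
    using Chernoff_ineq_nn_integral_ge[OF \<open>l > 0\<close>, of UNIV "measure_pmf (X N)" "f N"] by simp
  also have "\<dots> \<le> ennreal (exp (- l * (f 0 x\<^sub>0 + t)))
                   * (ennreal (exp (l * f 0 x\<^sub>0)) * ennreal (exp (real N * (l\<^sup>2 * B\<^sup>2 / 2))))"
    using exp_moment_le[OF \<open>l > 0\<close> order_refl] by (intro mult_left_mono) (auto simp: X_0)
  also have "\<dots> = ennreal (exp (- l * (f 0 x\<^sub>0 + t) + l * f 0 x\<^sub>0 + real N * (l\<^sup>2 * B\<^sup>2 / 2)))"
    by (simp add: ennreal_mult[symmetric] exp_add[symmetric] algebra_simps)
  finally show ?thesis by (simp only: exponent measure_pmf.emeasure_eq_measure ennreal_le_iff2) simp

qed

lemma azuma_hoeffding: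
  assumes X_0: "X 0 = return_pmf x\<^sub>0" and "t > 0" "B > 0" "N > 0"
  shows "measure_pmf.prob (X N) {x. \<bar>f N x - f 0 x\<^sub>0\<bar> \<ge> t} \<le> 2 * exp (- t\<^sup>2 / (2 * real N * B\<^sup>2))"
proof -
  interpret neg: pmf_chain_martingale X K "\<lambda>m x. - f m x" N B by (rule uminus)
  have "{x. \<bar>f N x - f 0 x\<^sub>0\<bar> \<ge> t}
          = {x. f N x - f 0 x\<^sub>0 \<ge> t} \<union> {x. - f N x - - f 0 x\<^sub>0 \<ge> t}"
    by (auto simp: abs_le_iff abs_if)
  then have "measure_pmf.prob (X N) {x. \<bar>f N x - f 0 x\<^sub>0\<bar> \<ge> t}
               \<le> measure_pmf.prob (X N) {x. f N x - f 0 x\<^sub>0 \<ge> t}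
                 + measure_pmf.prob (X N) {x. - f N x - - f 0 x\<^sub>0 \<ge> t}"
    by (simp add: measure_Un_le)
  then show ?thesis
    using upper_tail_le[OF assms] neg.upper_tail_le[OF assms] by simp
qed

end


section \<open>Degree sequences\<close>

definition attach :: "nat list \<Rightarrow> nat \<Rightarrow> nat list" where
  "attach ds i = ds[i := ds ! i + 1] @ [1]"

text \<open>Positive degrees at most \<open>L + 1\<close> with total \<open>2 L\<close> are exactly what makes
  \<open>attach_weight\<close> a probability distribution with all weights in \<open>[0, 1]\<close>.\<close>

definition degree_seq :: "nat \<Rightarrow> nat list \<Rightarrow> bool" where
  "degree_seq L ds \<longleftrightarrow>
     length ds = L \<and> (\<forall>i<L. 1 \<le> ds ! i \<and> ds ! i \<le> L + 1) \<and> (\<Sum>i<L. ds ! i) = 2 * L"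

definition deg_sum :: "(nat \<Rightarrow> real) \<Rightarrow> nat list \<Rightarrow> real" where
  "deg_sum g ds = (\<Sum>j<length ds. g (ds ! j))"

lemma deg_sum_attach:
  assumes "i < length ds"
  shows "deg_sum g (attach ds i) = deg_sum g ds - g (ds ! i) + g (ds ! i + 1) + g 1"
proof -
  have "deg_sum g (attach ds i) = (\<Sum>j<length ds. g (ds[i := ds ! i + 1] ! j)) + g 1"
    by (simp add: deg_sum_def attach_def nth_append)
  also have "(\<Sum>j<length ds. g (ds[i := ds ! i + 1] ! j))
               = (\<Sum>j<length ds. g (ds ! j) + (if j = i then g (ds ! i + 1) - g (ds ! i) else 0))"
    by (rule sum.cong) (auto simp: nth_list_update)
  also have "\<dots> = deg_sum g ds + (g (ds ! i + 1) - g (ds ! i))"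
    using assms by (simp add: sum.distrib deg_sum_def)
  finally show ?thesis by simp
qed

lemma degree_seq_attach:
  assumes "degree_seq L ds" "i < L"
  shows "degree_seq (Suc L) (attach ds i)"
proof -
  have len: "length ds = L" using assms by (simp add: degree_seq_def)
  have "(\<Sum>j<Suc L. attach ds i ! j) = (\<Sum>j<L. ds[i := ds ! i + 1] ! j) + 1"
    using len by (simp add: attach_def nth_append)
  also have "(\<Sum>j<L. ds[i := ds ! i + 1] ! j) = (\<Sum>j<L. ds ! j + (if j = i then 1 else 0))"
    by (rule sum.cong) (auto simp: nth_list_update len)
  also have "\<dots> = (\<Sum>j<L. ds ! j) + 1"
    using assms(2) by (simp add: sum.distrib)
  finally have "(\<Sum>j<Suc L. attach ds i ! j) = 2 * Suc L"
    using assms(1) by (simp add: degree_seq_def)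
  moreover have "1 \<le> attach ds i ! j \<and> attach ds i ! j \<le> Suc L + 1" if "j < Suc L" for j
    using assms len that
    by (cases "j < L") (auto simp: degree_seq_def attach_def nth_append nth_list_update)
  ultimately show ?thesis using len by (simp add: degree_seq_def attach_def)
qed

lemma N_gt_eq_deg_sum:
  assumes "degree_seq L ds"
  shows "real (N_gt k ds) = deg_sum (\<lambda>d. if k < d then 1 else 0) ds"
proof (cases "k = 0")
  case True
  have "deg_sum (\<lambda>d. if k < d then 1 else 0) ds = (\<Sum>j<length ds. 1)"
    unfolding deg_sum_def using assms True by (intro sum.cong) (auto simp: degree_seq_def)
  then show ?thesis using True by (simp add: N_gt_def)
next
  case False
  have "deg_sum (\<lambda>d. if k < d then 1 else 0) ds = (\<Sum>j\<in>{j\<in>{..<length ds}. k < ds ! j}. 1)"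
    unfolding deg_sum_def by (rule sum.inter_filter[symmetric]) simp
  also have "{j\<in>{..<length ds}. k < ds ! j} = {i. i < length ds \<and> ds ! i > k}" by auto
  finally show ?thesis using False by (simp add: N_gt_def)
qed

lemma N_gt_eq_0_if_degree_seq:
  assumes "degree_seq L ds" "L + 1 \<le> k"
  shows "N_gt k ds = 0"
proof -
  have "{i. i < length ds \<and> ds ! i > k} = {}" using assms by (auto simp: degree_seq_def)
  then show ?thesis using assms by (simp add: N_gt_def)
qed

context
  fixes \<delta> :: real
  assumes \<delta>_gt: "\<delta> > -1"
begin

lemma attach_weight_nonneg:
  assumes "degree_seq L ds"
  shows "0 \<le> attach_weight \<delta> ds i"
proof (cases "i < length ds")
  case True
  then have "0 < real (ds ! i) + \<delta>" using assms \<delta>_gt by (force simp: degree_seq_def)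
  moreover have "0 < (2 + \<delta>) * real (length ds)" using \<delta>_gt True by (intro mult_pos_pos) auto
  ultimately show ?thesis using True by (simp add: attach_weight_def)
qed (simp add: attach_weight_def)

lemma attach_weight_le_1:
  assumes "degree_seq L ds"
  shows "attach_weight \<delta> ds i \<le> 1"
proof (cases "i < length ds")
  case True
  then have L: "length ds = L" "1 \<le> L" and "ds ! i \<le> L + 1"
    using assms by (auto simp: degree_seq_def)
  then have "real (ds ! i) + \<delta> \<le> real L + 1 + \<delta>" by simp
  also have "\<dots> \<le> (2 + \<delta>) * real L"
    using mult_nonneg_nonneg[of "real L - 1" "1 + \<delta>"] L \<delta>_gt by (simp add: algebra_simps)
  finally show ?thesis using True L \<delta>_gt by (simp add: attach_weight_def)
qed (simp add: attach_weight_def)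

lemma sum_attach_weight:
  assumes "degree_seq L ds" "1 \<le> L"
  shows "(\<Sum>i<L. attach_weight \<delta> ds i) = 1"
proof -
  have len: "length ds = L" and "(\<Sum>i<L. ds ! i) = 2 * L"
    using assms by (auto simp: degree_seq_def)
  then have "(\<Sum>i<L. real (ds ! i) + \<delta>) = (2 + \<delta>) * real L"
    by (simp add: sum.distrib algebra_simps flip: of_nat_sum)
  moreover have "(\<Sum>i<L. attach_weight \<delta> ds i) = (\<Sum>i<L. real (ds ! i) + \<delta>) / ((2 + \<delta>) * real L)"
    by (simp add: attach_weight_def len sum_divide_distrib)
  ultimately show ?thesis using assms \<delta>_gt by simp
qed

lemma pmf_embed_attach_weight:
  assumes "degree_seq L ds" "1 \<le> L"
  shows "pmf (embed_pmf (attach_weight \<delta> ds)) i = attach_weight \<delta> ds i"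
    and "set_pmf (embed_pmf (attach_weight \<delta> ds)) \<subseteq> {..<L}"
proof -
  have len: "length ds = L" using assms by (simp add: degree_seq_def)
  have "(\<integral>\<^sup>+i. ennreal (attach_weight \<delta> ds i) \<partial>count_space UNIV)
          = (\<Sum>i<L. ennreal (attach_weight \<delta> ds i))"
    by (rule nn_integral_count_space') (auto simp: attach_weight_def len)
  also have "\<dots> = 1"
    using attach_weight_nonneg[OF assms(1)] sum_attach_weight[OF assms] by (simp add: sum_ennreal)
  finally have total: "(\<integral>\<^sup>+i. ennreal (attach_weight \<delta> ds i) \<partial>count_space UNIV) = 1" .
  show "pmf (embed_pmf (attach_weight \<delta> ds)) i = attach_weight \<delta> ds i"
    by (rule pmf_embed_pmf) (use attach_weight_nonneg[OF assms(1)] total in auto)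
  have "set_pmf (embed_pmf (attach_weight \<delta> ds)) = {i. attach_weight \<delta> ds i \<noteq> 0}"
    by (rule set_embed_pmf) (use attach_weight_nonneg[OF assms(1)] total in auto)
  then show "set_pmf (embed_pmf (attach_weight \<delta> ds)) \<subseteq> {..<L}"
    by (auto simp: attach_weight_def len split: if_splits)
qed

lemma set_pmf_modelA_step:
  assumes "degree_seq L ds" "1 \<le> L"
  shows "set_pmf (modelA_step \<delta> ds) \<subseteq> attach ds ` {..<L}"
  using pmf_embed_attach_weight(2)[OF assms] by (auto simp: modelA_step_def attach_def)

lemma expectation_modelA_step:
  assumes "degree_seq L ds" "1 \<le> L"
  shows "measure_pmf.expectation (modelA_step \<delta> ds) F
           = (\<Sum>i<L. attach_weight \<delta> ds i * F (attach ds i))"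
proof -
  have "measure_pmf.expectation (modelA_step \<delta> ds) F
          = measure_pmf.expectation (embed_pmf (attach_weight \<delta> ds)) (\<lambda>i. F (attach ds i))"
    by (simp add: modelA_step_def attach_def)
  also have "\<dots> = (\<Sum>i<L. pmf (embed_pmf (attach_weight \<delta> ds)) i *\<^sub>R F (attach ds i))"
    by (rule integral_measure_pmf) (use pmf_embed_attach_weight(2)[OF assms] in auto)
  finally show ?thesis using pmf_embed_attach_weight(1)[OF assms] by simp
qed

lemma degree_seq_modelA_aux: "ds \<in> set_pmf (modelA_aux \<delta> m) \<Longrightarrow> degree_seq (Suc m) ds"
proof (induction m arbitrary: ds)
  case 0
  then show ?case by (simp add: degree_seq_def)
next
  case (Suc m)
  then obtain ds' where ds': "ds' \<in> set_pmf (modelA_aux \<delta> m)" "ds \<in> set_pmf (modelA_step \<delta> ds')"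
    by auto
  have "degree_seq (Suc m) ds'" using Suc.IH ds'(1) .
  moreover obtain i where "i < Suc m" "ds = attach ds' i"
    using set_pmf_modelA_step[OF \<open>degree_seq (Suc m) ds'\<close>] ds'(2) by auto
  ultimately show ?case using degree_seq_attach by simp
qed

lemma finite_set_pmf_modelA_aux: "finite (set_pmf (modelA_aux \<delta> m))"
proof (induction m)
  case (Suc m)
  have "finite (set_pmf (modelA_step \<delta> ds))" if "ds \<in> set_pmf (modelA_aux \<delta> m)" for ds
    by (rule finite_subset[OF set_pmf_modelA_step[OF degree_seq_modelA_aux[OF that]]]) simp_all
  with Suc show ?case by simp
qed simp

lemma expectation_modelA_aux_Suc:
  fixes h :: "nat list \<Rightarrow> real"
  shows "measure_pmf.expectation (modelA_aux \<delta> (Suc m)) h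
     = measure_pmf.expectation (modelA_aux \<delta> m) (\<lambda>ds. measure_pmf.expectation (modelA_step \<delta> ds) h)"
  unfolding modelA_aux.simps
proof (rule expectation_bind_pmf_finite[OF finite_set_pmf_modelA_aux])
  fix ds assume "ds \<in> set_pmf (modelA_aux \<delta> m)"
  then show "finite (set_pmf (modelA_step \<delta> ds))"
    using finite_set_pmf_modelA_aux[of "Suc m"] by (auto intro: finite_subset[rotated])
qed

text \<open>A step raises \<open>N_gt k\<close> by one exactly when the new edge hits a vertex of degree \<open>k\<close>,
  and there are \<open>N_gt (k - 1) - N_gt k\<close> of those.\<close>

lemma expectation_modelA_step_N_gt:
  assumes "degree_seq L ds" "1 \<le> L" "1 \<le> k"
  shows "measure_pmf.expectation (modelA_step \<delta> ds) (\<lambda>x. real (N_gt k x))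
           = real (N_gt k ds)
             + (real k + \<delta>) / ((2 + \<delta>) * real L) * (real (N_gt (k - 1) ds) - real (N_gt k ds))"
proof -
  have len: "length ds = L" using assms by (simp add: degree_seq_def)
  let ?I = "\<lambda>k d. if k < d then 1 else (0::real)"
  let ?hit = "\<lambda>i. if ds ! i = k then 1 else (0::real)"
  have N_gt_attach: "real (N_gt k (attach ds i)) = real (N_gt k ds) + ?hit i" if "i < L" for i
    using assms(3) that len
    by (simp add: N_gt_eq_deg_sum[OF degree_seq_attach[OF assms(1) that]]
        N_gt_eq_deg_sum[OF assms(1)] deg_sum_attach)
  have "real (N_gt (k - 1) ds) - real (N_gt k ds) = (\<Sum>i<L. ?I (k - 1) (ds ! i) - ?I k (ds ! i))"
    by (simp add: N_gt_eq_deg_sum[OF assms(1)] deg_sum_def len sum_subtractf)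
  also have "\<dots> = (\<Sum>i<L. ?hit i)"
    using assms(3) by (intro sum.cong) auto
  finally have hit_count: "real (N_gt (k - 1) ds) - real (N_gt k ds) = (\<Sum>i<L. ?hit i)" .
  have hits: "(\<Sum>i<L. attach_weight \<delta> ds i * ?hit i)
      = (real k + \<delta>) / ((2 + \<delta>) * real L) * (real (N_gt (k - 1) ds) - real (N_gt k ds))"
    unfolding hit_count sum_distrib_left by (intro sum.cong) (auto simp: attach_weight_def len)
  have "measure_pmf.expectation (modelA_step \<delta> ds) (\<lambda>x. real (N_gt k x))
          = (\<Sum>i<L. attach_weight \<delta> ds i * (real (N_gt k ds) + ?hit i))"
    using N_gt_attach by (simp add: expectation_modelA_step[OF assms(1,2)])
  also have "\<dots> = (\<Sum>i<L. attach_weight \<delta> ds i) * real (N_gt k ds)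
                   + (\<Sum>i<L. attach_weight \<delta> ds i * ?hit i)"
    by (simp add: distrib_left sum.distrib sum_distrib_right)
  also have "\<dots> = real (N_gt k ds)
                   + (real k + \<delta>) / ((2 + \<delta>) * real L) * (real (N_gt (k - 1) ds) - real (N_gt k ds))"
    by (simp add: sum_attach_weight[OF assms(1,2)] hits)
  finally show ?thesis .
qed

end

section \<open>The profile \<open>p_gt\<close> and the mean of \<open>N_gt k\<close>\<close>

text \<open>Indexed like \<open>modelA_aux\<close>: \<open>mean_N_gt \<delta> m k\<close> is the mean of \<open>N_gt k\<close> on \<open>G(m + 1)\<close>.\<close>

definition mean_N_gt :: "real \<Rightarrow> nat \<Rightarrow> nat \<Rightarrow> real" where
  "mean_N_gt \<delta> m k = measure_pmf.expectation (modelA_aux \<delta> m) (\<lambda>x. real (N_gt k x))"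

context
  fixes \<delta> :: real
  assumes \<delta>_gt: "\<delta> > -1"
begin

lemma p_gt_0: "p_gt \<delta> 0 = 1"
proof -
  have "Gamma (1 + \<delta>) > 0" "Gamma (3 + 2 * \<delta>) > 0" using \<delta>_gt by (auto intro!: Gamma_real_pos)
  then show ?thesis by (simp add: p_gt_def)
qed

lemma p_gt_Suc: "p_gt \<delta> (Suc k) = p_gt \<delta> k * (real k + 1 + \<delta>) / (real k + 3 + 2 * \<delta>)"
proof -
  have pos: "real k + 1 + \<delta> > 0" "real k + 3 + 2 * \<delta> > 0" using \<delta>_gt by auto
  have Gamma_Suc: "Gamma (x + 1) = x * Gamma x" if "x > 0" for x :: real
    using that by (intro Gamma_plus1) (auto elim: nonpos_Ints_cases)
  have "Gamma (real (Suc k) + 1 + \<delta>) = (real k + 1 + \<delta>) * Gamma (real k + 1 + \<delta>)"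
    using Gamma_Suc[OF pos(1)] by (simp add: algebra_simps)
  moreover have "Gamma (real (Suc k) + 3 + 2 * \<delta>)
                   = (real k + 3 + 2 * \<delta>) * Gamma (real k + 3 + 2 * \<delta>)"
    using Gamma_Suc[OF pos(2)] by (simp add: algebra_simps)
  moreover have "Gamma (real k + 3 + 2 * \<delta>) > 0" "Gamma (1 + \<delta>) > 0"
    using pos \<delta>_gt by (auto intro!: Gamma_real_pos)
  ultimately show ?thesis using pos by (simp add: p_gt_def field_simps)
qed

lemma p_gt_Suc_diff: "(real (Suc k) + \<delta>) * (p_gt \<delta> k - p_gt \<delta> (Suc k)) = (2 + \<delta>) * p_gt \<delta> (Suc k)"
proof -
  have "real k + 3 + 2 * \<delta> > 0" using \<delta>_gt by auto
  then have "p_gt \<delta> (Suc k) * (real k + 3 + 2 * \<delta>) = p_gt \<delta> k * (real k + 1 + \<delta>)"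
    by (simp add: p_gt_Suc)
  then show ?thesis by (simp add: algebra_simps)
qed

lemma p_gt_bounds: "0 \<le> p_gt \<delta> k \<and> p_gt \<delta> k \<le> 1 \<and> real k * p_gt \<delta> k \<le> 1"
proof (induction k)
  case 0
  then show ?case by (simp add: p_gt_0)
next
  case (Suc k)
  define r where "r = (real k + 1 + \<delta>) / (real k + 3 + 2 * \<delta>)"
  have pos: "real k + 1 + \<delta> > 0" "real k + 3 + 2 * \<delta> > 0" using \<delta>_gt by auto
  then have r: "0 \<le> r" "r \<le> 1" using \<delta>_gt by (auto simp: r_def divide_le_eq)
  have p_Suc: "p_gt \<delta> (Suc k) = p_gt \<delta> k * r" by (simp add: p_gt_Suc r_def)
  have "real (Suc k) * p_gt \<delta> (Suc k) \<le> 1"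
  proof (cases "k = 0")
    case True
    then show ?thesis using p_Suc r p_gt_0 by simp
  next
    case False
    have "(real k + 1) * (real k + 1 + \<delta>) \<le> real k * (real k + 3 + 2 * \<delta>)"
      using mult_nonneg_nonneg[of "1 + \<delta>" "real k - 1"] False \<delta>_gt by (simp add: algebra_simps)
    then have "(real k + 1) * r \<le> real k" using pos by (simp add: r_def divide_le_eq mult.commute)
    then have "(real k + 1) * r * p_gt \<delta> k \<le> real k * p_gt \<delta> k"
      using Suc.IH by (intro mult_right_mono) auto
    then have "real (Suc k) * p_gt \<delta> (Suc k) \<le> real k * p_gt \<delta> k"
      by (simp add: p_Suc algebra_simps)
    then show ?thesis using Suc.IH by simp
  qed
  moreover have "0 \<le> p_gt \<delta> (Suc k)" "p_gt \<delta> (Suc k) \<le> 1"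
    using Suc.IH r by (auto simp: p_Suc mult_le_one)
  ultimately show ?case by simp
qed

lemma mult_p_gt_le_1: "real L \<le> real k \<Longrightarrow> real L * p_gt \<delta> k \<le> 1"
  using mult_right_mono[of "real L" "real k" "p_gt \<delta> k"] p_gt_bounds[of k] by simp

lemma mean_N_gt_0: "mean_N_gt \<delta> m 0 = real (Suc m)"
  using expectation_cong_set_pmf[of "modelA_aux \<delta> m" "\<lambda>x. real (N_gt 0 x)" "\<lambda>_. real (Suc m)"]
    degree_seq_modelA_aux[OF \<delta>_gt] by (simp add: mean_N_gt_def N_gt_def degree_seq_def)

lemma mean_N_gt_large:
  assumes "Suc m + 1 \<le> k"
  shows "mean_N_gt \<delta> m k = 0"
  using expectation_cong_set_pmf[of "modelA_aux \<delta> m" "\<lambda>x. real (N_gt k x)" "\<lambda>_. 0"]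
    N_gt_eq_0_if_degree_seq[OF degree_seq_modelA_aux[OF \<delta>_gt] assms] by (simp add: mean_N_gt_def)

lemma mean_N_gt_Suc:
  assumes "1 \<le> k"
  shows "mean_N_gt \<delta> (Suc m) k
           = mean_N_gt \<delta> m k
             + (real k + \<delta>) / ((2 + \<delta>) * real (Suc m)) * (mean_N_gt \<delta> m (k - 1) - mean_N_gt \<delta> m k)"
proof -
  have integrable: "integrable (measure_pmf (modelA_aux \<delta> m)) f" for f :: "nat list \<Rightarrow> real"
    by (rule integrable_measure_pmf_finite[OF finite_set_pmf_modelA_aux[OF \<delta>_gt]])
  have "mean_N_gt \<delta> (Suc m) k
          = measure_pmf.expectation (modelA_aux \<delta> m) (\<lambda>ds. real (N_gt k ds)
              + (real k + \<delta>) / ((2 + \<delta>) * real (Suc m)) * (real (N_gt (k - 1) ds) - real (N_gt k ds)))"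
    unfolding mean_N_gt_def expectation_modelA_aux_Suc[OF \<delta>_gt]
    by (rule expectation_cong_set_pmf)
      (simp add: expectation_modelA_step_N_gt[OF \<delta>_gt degree_seq_modelA_aux[OF \<delta>_gt] _ assms])
  then show ?thesis by (simp add: integrable mean_N_gt_def)
qed

text \<open>The mean of \<open>N_gt k\<close> and \<open>n p_gt k\<close> satisfy the same recursion in \<open>n\<close>, so the error is
  propagated by a convex combination.\<close>

lemma mean_N_gt_error_Suc:
  assumes "1 \<le> k" "k \<le> Suc (Suc m)"
  defines "c \<equiv> (real k + \<delta>) / ((2 + \<delta>) * real (Suc m))"
  shows "0 \<le> c" "c \<le> 1"
    and "mean_N_gt \<delta> (Suc m) k - real (Suc (Suc m)) * p_gt \<delta> k
           = (1 - c) * (mean_N_gt \<delta> m k - real (Suc m) * p_gt \<delta> k)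
             + c * (mean_N_gt \<delta> m (k - 1) - real (Suc m) * p_gt \<delta> (k - 1))"
proof -
  obtain j where k: "k = Suc j" using assms(1) by (cases k) auto
  show "0 \<le> c" "c \<le> 1"
    using assms \<delta>_gt mult_nonneg_nonneg[of "1 + \<delta>" "real m"]
    by (auto simp: c_def divide_le_eq algebra_simps)
  have "c * (2 + \<delta>) * real (Suc m) = real k + \<delta>"
    using \<delta>_gt by (simp add: c_def)
  then have "(2 + \<delta>) * (c * real (Suc m) * (p_gt \<delta> j - p_gt \<delta> k))
               = (real (Suc j) + \<delta>) * (p_gt \<delta> j - p_gt \<delta> (Suc j))"
    using k by (simp add: ac_simps)
  also have "\<dots> = (2 + \<delta>) * p_gt \<delta> k"
    using p_gt_Suc_diff[of j] k by simp
  finally have p_rec: "c * real (Suc m) * (p_gt \<delta> j - p_gt \<delta> k) = p_gt \<delta> k"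
    using \<delta>_gt by simp
  have "mean_N_gt \<delta> (Suc m) k - real (Suc (Suc m)) * p_gt \<delta> k
          = (1 - c) * (mean_N_gt \<delta> m k - real (Suc m) * p_gt \<delta> k)
            + c * (mean_N_gt \<delta> m j - real (Suc m) * p_gt \<delta> j)
            + (c * real (Suc m) * (p_gt \<delta> j - p_gt \<delta> k) - p_gt \<delta> k)"
    using mean_N_gt_Suc[OF assms(1), of m] k unfolding c_def[symmetric] by (simp add: algebra_simps)
  then show "mean_N_gt \<delta> (Suc m) k - real (Suc (Suc m)) * p_gt \<delta> k
               = (1 - c) * (mean_N_gt \<delta> m k - real (Suc m) * p_gt \<delta> k)
                 + c * (mean_N_gt \<delta> m (k - 1) - real (Suc m) * p_gt \<delta> (k - 1))"
    using p_rec k by simp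
qed

lemma mean_N_gt_approx: "\<bar>mean_N_gt \<delta> m k - real (Suc m) * p_gt \<delta> k\<bar> \<le> 1"
proof (induction m arbitrary: k)
  case 0
  have "N_gt k [2] \<le> 1" by (auto simp: N_gt_def card_le_Suc0_iff_eq)
  then show ?case using p_gt_bounds[of k] by (auto simp: mean_N_gt_def)
next
  case (Suc m)
  consider "k = 0" | "Suc (Suc m) + 1 \<le> k" | "1 \<le> k" "k \<le> Suc (Suc m)"
    by linarith
  then show ?case
  proof cases
    case 1
    then show ?thesis by (simp add: mean_N_gt_0 p_gt_0)
  next
    case 2
    then show ?thesis
      using mult_p_gt_le_1[of "Suc (Suc m)" k] p_gt_bounds[of k] by (simp add: mean_N_gt_large)
  next
    case 3
    define c where "c = (real k + \<delta>) / ((2 + \<delta>) * real (Suc m))"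
    note c = mean_N_gt_error_Suc[OF 3, folded c_def]
    have "\<bar>(1 - c) * (mean_N_gt \<delta> m k - real (Suc m) * p_gt \<delta> k)\<bar> \<le> 1 - c"
      "\<bar>c * (mean_N_gt \<delta> m (k - 1) - real (Suc m) * p_gt \<delta> (k - 1))\<bar> \<le> c"
      using Suc.IH[of k] Suc.IH[of "k - 1"] c(1,2) by (auto simp: abs_mult intro: mult_left_le)
    then show ?thesis using c(3) by linarith
  qed
qed

end

section \<open>The Doob martingale of \<open>N_gt k\<close>\<close>

text \<open>The Doob martingale \<open>E[N_gt k (G(N+1)) | G(m+1)]\<close> in closed form.
  \<open>exceed_prob \<delta> k N r d\<close> is the probability that a vertex of degree \<open>d\<close> in a graph on
  \<open>N + 1 - r\<close> vertices has degree \<open>> k\<close> once the graph has \<open>N + 1\<close> vertices: in the next step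
  it gains an edge with probability \<open>(d + \<delta>) / ((2 + \<delta>) (N - r))\<close>, independently of the rest of
  the degree sequence.  The clamp to \<open>[0, 1]\<close> only affects degrees that cannot occur and keeps
  the function in \<open>[0, 1]\<close> everywhere.  \<open>newcomer_exceed\<close> accounts for the vertices yet to
  arrive, each with degree 1.\<close>

definition clamp01 :: "real \<Rightarrow> real" where
  "clamp01 x = max 0 (min 1 x)"

primrec exceed_prob :: "real \<Rightarrow> nat \<Rightarrow> nat \<Rightarrow> nat \<Rightarrow> nat \<Rightarrow> real" where
  "exceed_prob \<delta> k N 0 d = (if k < d then 1 else 0)"
| "exceed_prob \<delta> k N (Suc r) d =
     (let c = clamp01 ((real d + \<delta>) / ((2 + \<delta>) * real (N - r)))
      in (1 - c) * exceed_prob \<delta> k N r d + c * exceed_prob \<delta> k N r (Suc d))"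

primrec newcomer_exceed :: "real \<Rightarrow> nat \<Rightarrow> nat \<Rightarrow> nat \<Rightarrow> real" where
  "newcomer_exceed \<delta> k N 0 = 0"
| "newcomer_exceed \<delta> k N (Suc r) = newcomer_exceed \<delta> k N r + exceed_prob \<delta> k N r 1"

definition doob_N_gt :: "real \<Rightarrow> nat \<Rightarrow> nat \<Rightarrow> nat \<Rightarrow> nat list \<Rightarrow> real" where
  "doob_N_gt \<delta> k N m ds = deg_sum (exceed_prob \<delta> k N (N - m)) ds + newcomer_exceed \<delta> k N (N - m)"

definition exceed_gain :: "real \<Rightarrow> nat \<Rightarrow> nat \<Rightarrow> nat \<Rightarrow> nat \<Rightarrow> real" where
  "exceed_gain \<delta> k N r d = exceed_prob \<delta> k N r (Suc d) - exceed_prob \<delta> k N r d"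

lemma exceed_prob_bounds: "0 \<le> exceed_prob \<delta> k N r d \<and> exceed_prob \<delta> k N r d \<le> 1"
proof (induction r arbitrary: d)
  case (Suc r)
  define c where "c = clamp01 ((real d + \<delta>) / ((2 + \<delta>) * real (N - r)))"
  have c: "0 \<le> c" "c \<le> 1" by (auto simp: c_def clamp01_def)
  have "exceed_prob \<delta> k N (Suc r) d = (1 - c) * exceed_prob \<delta> k N r d + c * exceed_prob \<delta> k N r (Suc d)"
    by (simp add: c_def Let_def)
  moreover have "(1 - c) * exceed_prob \<delta> k N r d + c * exceed_prob \<delta> k N r (Suc d) \<le> (1 - c) * 1 + c * 1"
    using Suc c by (intro add_mono mult_left_mono) auto
  ultimately show ?case using Suc[of d] Suc[of "Suc d"] c by simp
qed simp

lemma abs_exceed_gain_le_1: "\<bar>exceed_gain \<delta> k N r d\<bar> \<le> 1"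
  using exceed_prob_bounds[of \<delta> k N r d] exceed_prob_bounds[of \<delta> k N r "Suc d"]
  by (simp add: exceed_gain_def abs_le_iff)

context
  fixes \<delta> :: real
  assumes \<delta>_gt: "\<delta> > -1"
begin

lemma exceed_prob_Suc_nth:
  assumes "degree_seq (N - r) ds" "i < N - r"
  shows "exceed_prob \<delta> k N (Suc r) (ds ! i)
           = exceed_prob \<delta> k N r (ds ! i) + attach_weight \<delta> ds i * exceed_gain \<delta> k N r (ds ! i)"
proof -
  have w: "(real (ds ! i) + \<delta>) / ((2 + \<delta>) * real (N - r)) = attach_weight \<delta> ds i"
    using assms by (simp add: attach_weight_def degree_seq_def)
  have clamp: "clamp01 (attach_weight \<delta> ds i) = attach_weight \<delta> ds i"
    using attach_weight_nonneg[OF \<delta>_gt assms(1)] attach_weight_le_1[OF \<delta>_gt assms(1)]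
    by (simp add: clamp01_def)
  show ?thesis
    unfolding exceed_prob.simps(2) Let_def w clamp exceed_gain_def by (simp add: algebra_simps)
qed

lemma doob_N_gt_attach:
  assumes "m < N" "degree_seq (Suc m) ds" "i < Suc m"
  defines "r \<equiv> N - Suc m"
  shows "doob_N_gt \<delta> k N (Suc m) (attach ds i) - doob_N_gt \<delta> k N m ds
           = exceed_gain \<delta> k N r (ds ! i)
             - (\<Sum>j<Suc m. attach_weight \<delta> ds j * exceed_gain \<delta> k N r (ds ! j))"
proof -
  have r: "N - m = Suc r" "N - r = Suc m" using assms(1) by (auto simp: r_def)
  have len: "length ds = Suc m" using assms(2) by (simp add: degree_seq_def)
  have "deg_sum (exceed_prob \<delta> k N (Suc r)) ds
          = deg_sum (exceed_prob \<delta> k N r) ds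
            + (\<Sum>j<Suc m. attach_weight \<delta> ds j * exceed_gain \<delta> k N r (ds ! j))"
    using exceed_prob_Suc_nth[where r=r and ds=ds] assms(2)
    by (simp add: deg_sum_def len r(2) sum.distrib del: exceed_prob.simps)
  moreover have "deg_sum (exceed_prob \<delta> k N r) (attach ds i)
          = deg_sum (exceed_prob \<delta> k N r) ds + exceed_gain \<delta> k N r (ds ! i) + exceed_prob \<delta> k N r 1"
    using assms(3) len by (simp add: deg_sum_attach exceed_gain_def)
  moreover have "N - Suc m = r" by (simp add: r_def)
  ultimately show ?thesis by (simp add: doob_N_gt_def r(1) del: exceed_prob.simps)
qed

lemma doob_N_gt_martingale:
  assumes "m < N" "ds \<in> set_pmf (modelA_aux \<delta> m)"
  shows "measure_pmf.expectation (modelA_step \<delta> ds) (doob_N_gt \<delta> k N (Suc m)) = doob_N_gt \<delta> k N m ds"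
proof -
  let ?w = "attach_weight \<delta> ds" and ?g = "\<lambda>j. exceed_gain \<delta> k N (N - Suc m) (ds ! j)"
  let ?A = "\<Sum>j<Suc m. ?w j * ?g j"
  have ds: "degree_seq (Suc m) ds" using degree_seq_modelA_aux[OF \<delta>_gt assms(2)] .
  have "measure_pmf.expectation (modelA_step \<delta> ds) (doob_N_gt \<delta> k N (Suc m))
          = (\<Sum>i<Suc m. ?w i * (doob_N_gt \<delta> k N m ds + ?g i - ?A))"
    using doob_N_gt_attach[OF assms(1) ds, of _ k, symmetric]
    by (simp add: expectation_modelA_step[OF \<delta>_gt ds] algebra_simps)
  also have "\<dots> = (\<Sum>i<Suc m. ?w i) * (doob_N_gt \<delta> k N m ds - ?A) + ?A"
    by (simp add: algebra_simps sum.distrib sum_subtractf flip: sum_distrib_left sum_distrib_right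
        del: sum.lessThan_Suc)
  finally show ?thesis by (simp add: sum_attach_weight[OF \<delta>_gt ds] del: sum.lessThan_Suc)
qed

lemma doob_N_gt_increment_le:
  assumes "m < N" "ds \<in> set_pmf (modelA_aux \<delta> m)" "ds' \<in> set_pmf (modelA_step \<delta> ds)"
  shows "\<bar>doob_N_gt \<delta> k N (Suc m) ds' - doob_N_gt \<delta> k N m ds\<bar> \<le> 2"
proof -
  let ?w = "attach_weight \<delta> ds" and ?g = "\<lambda>j. exceed_gain \<delta> k N (N - Suc m) (ds ! j)"
  have ds: "degree_seq (Suc m) ds" using degree_seq_modelA_aux[OF \<delta>_gt assms(2)] .
  obtain i where i: "i < Suc m" "ds' = attach ds i"
    using set_pmf_modelA_step[OF \<delta>_gt ds] assms(3) by auto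
  have "\<bar>\<Sum>j<Suc m. ?w j * ?g j\<bar> \<le> (\<Sum>j<Suc m. ?w j)"
    using attach_weight_nonneg[OF \<delta>_gt ds] abs_exceed_gain_le_1
    by (intro order.trans[OF sum_abs] sum_mono) (simp add: abs_mult mult_left_le)
  then have "\<bar>\<Sum>j<Suc m. ?w j * ?g j\<bar> \<le> 1"
    using sum_attach_weight[OF \<delta>_gt ds] by simp
  moreover have "\<bar>?g i\<bar> \<le> 1" by (rule abs_exceed_gain_le_1)
  ultimately show ?thesis unfolding i(2) using doob_N_gt_attach[OF assms(1) ds i(1), of k] by linarith
qed

lemma doob_N_gt_final:
  assumes "ds \<in> set_pmf (modelA_aux \<delta> N)"
  shows "doob_N_gt \<delta> k N N ds = real (N_gt k ds)"
proof -
  have "exceed_prob \<delta> k N 0 = (\<lambda>d. if k < d then 1 else 0)" by (rule ext) simp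
  then show ?thesis
    using N_gt_eq_deg_sum[OF degree_seq_modelA_aux[OF \<delta>_gt assms]] by (simp add: doob_N_gt_def)
qed

lemma modelA_doob_martingale:
  "pmf_chain_martingale (modelA_aux \<delta>) (modelA_step \<delta>) (doob_N_gt \<delta> k N) N 2"
  by unfold_locales (simp_all add: doob_N_gt_martingale doob_N_gt_increment_le)

end

section \<open>Concentration of the degree counts\<close>

lemma union_bound_estimate:
  fixes n :: nat
  assumes "2 \<le> n"
  shows "(1 + real n) * (2 * exp (- (4 * sqrt (real n * ln (real n)))\<^sup>2 / (8 * real (n - 1))))
           \<le> 4 / real n"
proof -
  have pos: "0 < ln (real n)" "1 \<le> real (n - 1)" "real (n - 1) \<le> real n"
    using assms by auto
  have "2 * ln (real n) * (8 * real (n - 1)) \<le> 16 * real n * ln (real n)"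
    using pos by (simp add: mult_right_mono)
  also have "\<dots> = (4 * sqrt (real n * ln (real n)))\<^sup>2"
    using pos by (simp add: power_mult_distrib)
  finally have "2 * ln (real n) \<le> (4 * sqrt (real n * ln (real n)))\<^sup>2 / (8 * real (n - 1))"
    using pos by (simp add: le_divide_eq)
  then have "exp (- (4 * sqrt (real n * ln (real n)))\<^sup>2 / (8 * real (n - 1)))
               \<le> exp (- (2 * ln (real n)))"
    by simp
  also have "exp (- (2 * ln (real n))) = 1 / exp (ln (real n)) ^ 2"
    by (simp add: exp_minus inverse_eq_divide flip: exp_of_nat_mult)
  also have "\<dots> = 1 / real n ^ 2"
    using assms by simp
  finally have "(1 + real n) * (2 * exp (- (4 * sqrt (real n * ln (real n)))\<^sup>2 / (8 * real (n - 1))))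
                  \<le> (1 + real n) * (2 * (1 / real n ^ 2))"
    by (intro mult_left_mono) auto
  also have "\<dots> \<le> 4 / real n"
    using assms by (simp add: field_simps power2_eq_square)
  finally show ?thesis .
qed

context
  fixes \<delta> :: real
  assumes \<delta>_gt: "\<delta> > -1"
begin

lemma N_gt_concentration:
  assumes "1 \<le> N" "t > 0"
  shows "measure_pmf.prob (modelA_aux \<delta> N)
           {ds. t \<le> \<bar>real (N_gt k ds) - mean_N_gt \<delta> N k\<bar>} \<le> 2 * exp (- t\<^sup>2 / (8 * real N))"
proof -
  let ?M = "modelA_aux \<delta> N" and ?f = "doob_N_gt \<delta> k N"
  interpret doob: pmf_chain_martingale "modelA_aux \<delta>" "modelA_step \<delta>" ?f N 2
    by (rule modelA_doob_martingale[OF \<delta>_gt])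
  have "mean_N_gt \<delta> N k = measure_pmf.expectation ?M (?f N)"
    unfolding mean_N_gt_def
    by (rule expectation_cong_set_pmf) (simp add: doob_N_gt_final[OF \<delta>_gt])
  also have "\<dots> = ?f 0 [2]"
    using doob.expectation_eq_initial[OF finite_set_pmf_modelA_aux[OF \<delta>_gt] order_refl] by simp
  finally have mean: "mean_N_gt \<delta> N k = ?f 0 [2]" .
  have "{ds. t \<le> \<bar>real (N_gt k ds) - mean_N_gt \<delta> N k\<bar>} \<inter> set_pmf ?M
          = {ds. t \<le> \<bar>?f N ds - ?f 0 [2]\<bar>} \<inter> set_pmf ?M"
    using doob_N_gt_final[OF \<delta>_gt] by (auto simp: mean)
  then have "measure_pmf.prob ?M {ds. t \<le> \<bar>real (N_gt k ds) - mean_N_gt \<delta> N k\<bar>}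
          = measure_pmf.prob ?M {ds. t \<le> \<bar>?f N ds - ?f 0 [2]\<bar>}"
    by (metis measure_Int_set_pmf)
  also have "\<dots> \<le> 2 * exp (- t\<^sup>2 / (2 * real N * 2\<^sup>2))"
    using assms by (intro doob.azuma_hoeffding) auto
  finally show ?thesis by simp
qed

lemma large_deviation_from_mean:
  assumes "ds \<in> set_pmf (modelA_aux \<delta> N)" "0 \<le> s"
    and "4 * (1 + s) \<le> \<bar>real (N_gt k ds) - real (Suc N) * p_gt \<delta> k\<bar>"
  shows "k \<le> Suc N"
    and "4 * s \<le> \<bar>real (N_gt k ds) - mean_N_gt \<delta> N k\<bar>"
proof -
  show "k \<le> Suc N"
  proof (rule ccontr)
    assume "\<not> k \<le> Suc N"
    then have "N_gt k ds = 0"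
      using N_gt_eq_0_if_degree_seq[OF degree_seq_modelA_aux[OF \<delta>_gt assms(1)]] by simp
    moreover have "0 \<le> real (Suc N) * p_gt \<delta> k" "real (Suc N) * p_gt \<delta> k \<le> 1"
      using p_gt_bounds[OF \<delta>_gt, of k] mult_p_gt_le_1[OF \<delta>_gt, of "Suc N" k] \<open>\<not> k \<le> Suc N\<close>
      by auto
    ultimately show False using assms(2,3) by simp
  qed
  show "4 * s \<le> \<bar>real (N_gt k ds) - mean_N_gt \<delta> N k\<bar>"
    using assms(3) mean_N_gt_approx[OF \<delta>_gt, of N k] by argo
qed

lemma prob_N_gt_deviation_le:
  assumes "2 \<le> n"
  shows "measure_pmf.prob (modelA \<delta> n)
           {ds. \<exists>k. \<bar>real (N_gt k ds) - real n * p_gt \<delta> k\<bar> \<ge> 4 * (1 + sqrt (real n * ln (real n)))}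
         \<le> 4 / real n"
proof -
  define N where "N = n - 1"
  define s where "s = sqrt (real n * ln (real n))"
  let ?M = "modelA_aux \<delta> N"
  let ?dev = "\<lambda>k. {ds. 4 * s \<le> \<bar>real (N_gt k ds) - mean_N_gt \<delta> N k\<bar>}"
  have n: "n = Suc N" "1 \<le> N" and "0 < 4 * s"
    using assms by (auto simp: N_def s_def)
  let ?bad = "{ds. \<exists>k. 4 * (1 + s) \<le> \<bar>real (N_gt k ds) - real n * p_gt \<delta> k\<bar>}"
  have "?bad \<inter> set_pmf ?M \<subseteq> (\<Union>k\<in>{..n}. ?dev k)"
  proof
    fix ds assume "ds \<in> ?bad \<inter> set_pmf ?M"
    then obtain k where "ds \<in> set_pmf ?M" "4 * (1 + s) \<le> \<bar>real (N_gt k ds) - real n * p_gt \<delta> k\<bar>"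
      by auto
    then have "k \<le> n" "ds \<in> ?dev k"
      using large_deviation_from_mean[of ds N s k] \<open>0 < 4 * s\<close> n(1) by auto
    then show "ds \<in> (\<Union>k\<in>{..n}. ?dev k)" by blast
  qed
  then have "measure_pmf.prob ?M (?bad \<inter> set_pmf ?M) \<le> measure_pmf.prob ?M (\<Union>k\<in>{..n}. ?dev k)"
    by (rule measure_pmf.finite_measure_mono) simp
  then have "measure_pmf.prob (modelA \<delta> n) ?bad \<le> measure_pmf.prob ?M (\<Union>k\<in>{..n}. ?dev k)"
    by (simp add: modelA_def N_def measure_Int_set_pmf)
  also have "\<dots> \<le> (\<Sum>k\<in>{..n}. measure_pmf.prob ?M (?dev k))"
    by (rule measure_pmf.finite_measure_subadditive_finite) auto
  also have "\<dots> \<le> (\<Sum>k\<in>{..n}. 2 * exp (- (4 * s)\<^sup>2 / (8 * real N)))"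
    by (intro sum_mono N_gt_concentration n(2) \<open>0 < 4 * s\<close>)
  also have "\<dots> \<le> 4 / real n"
    using union_bound_estimate[OF assms] by (simp add: s_def N_def)
  finally show ?thesis by (simp add: s_def)
qed

end

theorem mainTheorem6:
  fixes \<delta> :: real
  assumes "\<delta> > -1"
  shows "\<exists>C>0. (\<lambda>n::nat. measure_pmf.prob (modelA \<delta> n)
            {ds. \<exists>k. \<bar>real (N_gt k ds) - real n * p_gt \<delta> k\<bar>
                       \<ge> C * (1 + sqrt (real n * ln (real n)))}) \<longlonglongrightarrow> 0"
proof (intro exI conjI)
  show "(4::real) > 0" by simp
  have "\<forall>\<^sub>F n in sequentially. measure_pmf.prob (modelA \<delta> n)
          {ds. \<exists>k. \<bar>real (N_gt k ds) - real n * p_gt \<delta> k\<bar> \<ge> 4 * (1 + sqrt (real n * ln (real n)))}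
        \<le> 4 / real n"
    using eventually_ge_at_top[of "2::nat"] by eventually_elim (rule prob_N_gt_deviation_le[OF assms])
  then show "(\<lambda>n::nat. measure_pmf.prob (modelA \<delta> n)
          {ds. \<exists>k. \<bar>real (N_gt k ds) - real n * p_gt \<delta> k\<bar> \<ge> 4 * (1 + sqrt (real n * ln (real n)))})
        \<longlonglongrightarrow> 0"
    by (intro tendsto_sandwich[OF _ _ tendsto_const lim_const_over_n]) auto
qed

end
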